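(* Let $m,n$ be natural numbers and let $F_{ij}=\int_{-1}^{1}P_{i-1}(\eta)\,\eta^{j-1}\,d\eta$. For each natural $k$ let $\mathbf f_{k,\bullet}=(F_{k1},\dots,F_{k,n+1})^T$, and let $\mathbf f'=(F_{1,m+1},F_{1,m+2},\dots,F_{1,m+n+1})^T$. Then \[ \mathbf f'=\sum_{i=1}^{m+1}\alpha_i\,\mathbf f_{i,\bullet},\qquad \alpha_i=\frac{2i-1}{2}F_{i,m+1}. \]
   Context: $P_k$ denotes the Legendre polynomial of degree $k$; $F$ is the matrix of moments of the Legendre polynomials. (Note $F_{i,m+1}=0$ whenever $i+m+1$ is odd, so only $i$ of the same parity as $m+1$ contribute.) *)

theory Defs
  imports "HOL-Analysis.Analysis" "HOL-Computational_Algebra.Polynomial"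
begin

fun legendre :: "nat \<Rightarrow> real poly" where
  "legendre 0 = 1"
| "legendre (Suc 0) = [:0, 1:]"
| "legendre (Suc (Suc k)) =
     smult (1 / real (k + 2))
       (smult (real (2 * k + 3)) ([:0, 1:] * legendre (Suc k)) - smult (real (k + 1)) (legendre k))"

definition legendre_moment :: "nat \<Rightarrow> nat \<Rightarrow> real" ("F") where
  "legendre_moment i j = integral {-1..1} (\<lambda>t. poly (legendre (i - 1)) t * t ^ (j - 1))"

end

theory Submission
  imports Defs
begin

(*
  Expanding t^m in the orthogonal basis of Legendre polynomials,
  t^m = \<Sum>_{i\<le>m} (2i+1)/2 <P_i, t^m> P_i, and pairing with t^(j-1) gives the
  identity. Orthogonality and the norms <P_k, P_k> = 2/(2k+1) are derived from
  Bonnet's recurrence alone: the moments <P_k, t^j> satisfy the same three-term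
  recurrence in k, which pins them down to an explicit closed form vanishing for j < k.
*)

definition poly_integral :: "real poly \<Rightarrow> real" where
  "poly_integral p = integral {-1..1} (poly p)"

lemma poly_integrable: "poly p integrable_on {-1..1::real}"
  by (intro integrable_continuous_interval continuous_intros)

lemma poly_integral_diff: "poly_integral (p - q) = poly_integral p - poly_integral q"
  unfolding poly_integral_def poly_diff by (rule integral_diff) (simp_all add: poly_integrable)

lemma poly_integral_smult: "poly_integral (smult c p) = c * poly_integral p"
proof -
  have "poly (smult c p) = (\<lambda>t. c * poly p t)"
    by auto
  then show ?thesis
    by (simp add: poly_integral_def)
qed

lemma poly_integral_sum: "poly_integral (\<Sum>i\<in>A. p i) = (\<Sum>i\<in>A. poly_integral (p i))"
proof (cases "finite A")
  case True
  then show ?thesis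
    unfolding poly_integral_def poly_sum by (simp add: integral_sum poly_integrable)
next
  case False
  have "poly 0 = (\<lambda>t::real. 0)"
    by auto
  with False show ?thesis
    by (simp add: poly_integral_def)
qed

lemma poly_integral_monomial:
  "poly_integral ([:0, 1:] ^ j) = (if even j then 2 / real (j + 1) else 0)"
proof -
  have "((\<lambda>t. t ^ Suc j / Suc j) has_real_derivative t ^ j) (at t)" for t :: real
    using DERIV_cdivide[OF DERIV_pow[of "Suc j" t], of "real (Suc j)"] by simp
  then have "((\<lambda>t. t ^ j) has_integral (1 ^ Suc j / Suc j - (-1) ^ Suc j / Suc j)) {-1..1::real}"
    by (intro fundamental_theorem_of_calculus)
       (auto simp flip: has_real_derivative_iff_has_vector_derivative
         intro: has_field_derivative_at_within)
  moreover have "poly ([:0, 1:] ^ j) = (\<lambda>t::real. t ^ j)"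
    by (auto simp: poly_power)
  ultimately show ?thesis
    unfolding poly_integral_def by (auto simp: integral_unique add_divide_distrib)
qed

lemma poly_integral_mult_expand:
  assumes "degree q \<le> N"
  shows "poly_integral (p * q) = (\<Sum>i\<le>N. coeff q i * poly_integral (p * [:0, 1:] ^ i))"
proof -
  have "p * q = (\<Sum>i\<le>N. smult (coeff q i) (p * [:0, 1:] ^ i))"
    by (subst poly_as_sum_of_monoms'[OF assms, symmetric])
       (simp add: sum_distrib_left monom_altdef)
  then show ?thesis
    by (simp add: poly_integral_sum poly_integral_smult)
qed

definition legendre_mom :: "nat \<Rightarrow> nat \<Rightarrow> real" where
  "legendre_mom k j = poly_integral (legendre k * [:0, 1:] ^ j)"

lemma legendre_moment_eq_legendre_mom: "F i j = legendre_mom (i - 1) (j - 1)"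
proof -
  have "(\<lambda>t. poly (legendre (i - 1)) t * t ^ (j - 1))
      = poly (legendre (i - 1) * [:0, 1:] ^ (j - 1))"
    by (auto simp: poly_power)
  then show ?thesis
    unfolding legendre_moment_def legendre_mom_def poly_integral_def by simp
qed

lemma legendre_mom_rec:
  "real (k + 2) * legendre_mom (k + 2) j
     = real (2 * k + 3) * legendre_mom (k + 1) (j + 1) - real (k + 1) * legendre_mom k j"
proof -
  have "[:0, 1:] * legendre (Suc k) * [:0, 1:] ^ j = legendre (Suc k) * [:0, 1:] ^ Suc j"
    by (simp add: algebra_simps)
  then have "legendre_mom (Suc (Suc k)) j = 1 / real (k + 2)
      * (real (2 * k + 3) * legendre_mom (Suc k) (Suc j) - real (k + 1) * legendre_mom k j)"
    unfolding legendre_mom_def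
    by (simp only: legendre.simps left_diff_distrib mult_smult_left
        poly_integral_smult poly_integral_diff mult.assoc[symmetric])
  then show ?thesis
    by (simp add: numeral_eq_Suc)
qed

definition legendre_mom_formula :: "nat \<Rightarrow> nat \<Rightarrow> real" where
  "legendre_mom_formula k j = (if k \<le> j \<and> even (j - k)
     then 2 ^ (k + 1) * fact j * fact ((j + k) div 2) / (fact ((j - k) div 2) * fact (j + k + 1))
     else 0)"

lemma legendre_mom_formula_eq:
  "legendre_mom_formula k (k + 2 * r)
     = 2 ^ (k + 1) * fact (k + 2 * r) * fact (k + r) / (fact r * fact (2 * k + 2 * r + 1))"
  unfolding legendre_mom_formula_def by (simp add: algebra_simps)

lemma legendre_mom_formula_eq_0: "j < k \<or> odd (j - k) \<Longrightarrow> legendre_mom_formula k j = 0"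
  unfolding legendre_mom_formula_def by auto

lemma legendre_mom_formula_Suc_diag:
  "real (2 * k + 2 * r + 3) * real (2 * k + 2 * r + 2) * legendre_mom_formula (k + 1) (k + 1 + 2 * r)
     = 2 * real (k + 2 * r + 1) * real (k + r + 1) * legendre_mom_formula k (k + 2 * r)"
proof -
  have "fact (2 * k + 2 * r + 3)
      = real (2 * k + 2 * r + 3) * real (2 * k + 2 * r + 2) * fact (2 * k + 2 * r + 1)"
    by (simp add: numeral_eq_Suc)
  moreover have "fact (k + 1 + 2 * r) = real (k + 2 * r + 1) * fact (k + 2 * r)"
    by simp
  moreover have "fact (k + 1 + r) = real (k + r + 1) * fact (k + r)"
    by simp
  moreover have "2 * (k + 1) + 2 * r + 1 = 2 * k + 2 * r + 3"
    by simp
  ultimately show ?thesis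
    unfolding legendre_mom_formula_eq
    by (simp add: field_simps del: of_nat_add of_nat_mult of_nat_Suc)
qed

lemma legendre_mom_formula_Suc_Suc:
  "real (2 * k + 2 * r + 3) * real (2 * k + 2 * r + 2) * legendre_mom_formula (k + 2) (k + 2 * r)
     = 4 * real r * real (k + r + 1) * legendre_mom_formula k (k + 2 * r)"
proof (cases r)
  case 0
  then show ?thesis by (simp add: legendre_mom_formula_eq_0)
next
  case (Suc s)
  have arg: "k + 2 * r = k + 2 + 2 * s"
    by (simp add: Suc)
  have "fact (2 * (k + 2) + 2 * s + 1)
      = real (2 * k + 2 * r + 3) * real (2 * k + 2 * r + 2) * fact (2 * k + 2 * r + 1)"
    "fact (k + 2 + s) = real (k + r + 1) * fact (k + r)" "fact r = real r * fact s"
    "(2::real) ^ (k + 2 + 1) = 4 * 2 ^ (k + 1)"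
    by (simp_all add: Suc numeral_eq_Suc)
  note facts = this
  show ?thesis
    unfolding legendre_mom_formula_eq[of "k + 2" s, folded arg] legendre_mom_formula_eq[of k r] facts
    by (simp add: field_simps Suc del: of_nat_add of_nat_mult of_nat_Suc)
qed

lemma legendre_mom_formula_rec:
  "real (k + 2) * legendre_mom_formula (k + 2) j
     = real (2 * k + 3) * legendre_mom_formula (k + 1) (j + 1) - real (k + 1) * legendre_mom_formula k j"
proof (cases "j < k \<or> odd (j - k)")
  case True
  then show ?thesis by (auto simp: legendre_mom_formula_eq_0)
next
  case False
  then obtain r where j: "j = k + 2 * r" by (metis dvd_def le_add_diff_inverse not_le)
  let ?f = legendre_mom_formula
  define c where "c = real (2 * k + 2 * r + 3) * real (2 * k + 2 * r + 2)"
  have diag: "c * ?f (k + 1) (j + 1) = 2 * real (k + 2 * r + 1) * real (k + r + 1) * ?f k j"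
    using legendre_mom_formula_Suc_diag[of k r] by (simp add: c_def j add.commute add.left_commute)
  have "c * (real (k + 2) * ?f (k + 2) j) = real (k + 2) * (4 * real r * real (k + r + 1)) * ?f k j"
    using legendre_mom_formula_Suc_Suc[of k r] by (simp add: c_def j)
  also have "\<dots> = real (2 * k + 3) * (2 * real (k + 2 * r + 1) * real (k + r + 1)) * ?f k j
      - real (k + 1) * c * ?f k j"
    by (simp add: c_def algebra_simps)
  also have "\<dots> = real (2 * k + 3) * (c * ?f (k + 1) (j + 1)) - real (k + 1) * c * ?f k j"
    by (simp only: diag)
  also have "\<dots> = c * (real (2 * k + 3) * ?f (k + 1) (j + 1) - real (k + 1) * ?f k j)"
    by (simp add: algebra_simps)
  finally show ?thesis by (simp add: c_def)
qed

lemma legendre_mom_formula_0: "legendre_mom_formula 0 j = (if even j then 2 / real (j + 1) else 0)"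
proof (cases "even j")
  case True
  then obtain r where j: "j = 0 + 2 * r" by auto
  have "fact (2 * r + 1) = real (2 * r + 1) * fact (2 * r)"
    by simp
  then show ?thesis
    unfolding j legendre_mom_formula_eq
    by (simp add: field_simps del: of_nat_add of_nat_mult of_nat_Suc)
qed (simp add: legendre_mom_formula_eq_0)

lemma legendre_mom_formula_1: "legendre_mom_formula 1 j = (if odd j then 2 / real (j + 2) else 0)"
proof (cases "odd j")
  case True
  then obtain r where j: "j = 1 + 2 * r" by (metis add.commute oddE)
  have "fact (2 * 1 + 2 * r + 1) = real (2 * r + 3) * real (2 * r + 2) * fact (1 + 2 * r)"
    "fact (1 + r) = real (r + 1) * fact r"
    by (simp_all add: numeral_eq_Suc)
  then show ?thesis
    unfolding j legendre_mom_formula_eq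
    by (simp add: field_simps del: of_nat_add of_nat_mult of_nat_Suc) simp
next
  case False
  then have "j < 1 \<or> odd (j - 1)"
    by (cases j) auto
  with False show ?thesis
    by (simp add: legendre_mom_formula_eq_0)
qed

lemma legendre_mom_eq_legendre_mom_formula: "legendre_mom k j = legendre_mom_formula k j"
proof (induction k arbitrary: j rule: legendre.induct)
  case 1
  then show ?case by (simp add: legendre_mom_def poly_integral_monomial legendre_mom_formula_0)
next
  case 2
  have "legendre_mom 1 j = poly_integral ([:0, 1:] ^ Suc j)"
    by (simp add: legendre_mom_def)
  also have "\<dots> = (if even (Suc j) then 2 / real (Suc j + 1) else 0)"
    by (rule poly_integral_monomial)
  finally show ?case
    by (simp add: legendre_mom_formula_1 flip: One_nat_def)
next
  case (3 k)
  have "real (k + 2) * legendre_mom (k + 2) j = real (k + 2) * legendre_mom_formula (k + 2) j"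
    unfolding legendre_mom_rec legendre_mom_formula_rec using "3.IH" by simp
  then show ?case
    by (simp add: numeral_eq_Suc del: of_nat_add)
qed

lemma legendre_mom_eq_0: "j < k \<Longrightarrow> legendre_mom k j = 0"
  by (simp add: legendre_mom_eq_legendre_mom_formula legendre_mom_formula_eq_0)

lemma legendre_mom_diag_Suc:
  "real (2 * k + 3) * legendre_mom (k + 1) (k + 1) = real (k + 1) * legendre_mom k k"
  using legendre_mom_formula_Suc_diag[of k 0] by (simp add: legendre_mom_eq_legendre_mom_formula)

lemma coeff_legendre_eq_0: "k < j \<Longrightarrow> coeff (legendre k) j = 0"
proof (induction k arbitrary: j rule: legendre.induct)
  case (3 k)
  then obtain i where "j = Suc i" "Suc k < i"
    by (cases j) auto
  with 3 show ?case
    by (simp add: coeff_pCons)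
qed (auto simp: coeff_pCons split: nat.splits)

lemma degree_legendre_le: "degree (legendre k) \<le> k"
  by (intro degree_le) (simp add: coeff_legendre_eq_0)

lemma coeff_legendre_Suc_diag:
  "real (k + 1) * coeff (legendre (k + 1)) (k + 1) = real (2 * k + 1) * coeff (legendre k) k"
proof (cases k)
  case (Suc i)
  then show ?thesis
    by (simp add: coeff_pCons coeff_legendre_eq_0 field_simps del: of_nat_add of_nat_mult of_nat_Suc)
qed simp

lemma coeff_legendre_mult_legendre_mom:
  "coeff (legendre k) k * legendre_mom k k = 2 / real (2 * k + 1)"
proof (induction k)
  case 0
  then show ?case by (simp add: legendre_mom_eq_legendre_mom_formula legendre_mom_formula_0)
next
  case (Suc k)
  have "(real (k + 1) * coeff (legendre (k + 1)) (k + 1))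
        * (real (2 * k + 3) * legendre_mom (k + 1) (k + 1))
      = (real (2 * k + 1) * coeff (legendre k) k) * (real (k + 1) * legendre_mom k k)"
    by (simp only: coeff_legendre_Suc_diag legendre_mom_diag_Suc)
  also have "\<dots> = 2 * real (k + 1)"
    using Suc.IH by (simp add: field_simps del: of_nat_add of_nat_mult of_nat_Suc)
  finally show ?case
    by (simp add: field_simps del: of_nat_add of_nat_mult of_nat_Suc) simp
qed

lemma legendre_orthogonal_low_degree:
  assumes "degree q < k"
  shows "poly_integral (legendre k * q) = 0"
proof -
  have "poly_integral (legendre k * q) = (\<Sum>i\<le>degree q. coeff q i * legendre_mom k i)"
    by (simp add: poly_integral_mult_expand legendre_mom_def)
  also have "\<dots> = 0"
    using assms by (intro sum.neutral) (auto simp: legendre_mom_eq_0)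
  finally show ?thesis .
qed

lemma legendre_orthogonal:
  assumes "i \<noteq> k"
  shows "poly_integral (legendre k * legendre i) = 0"
proof (cases "i < k")
  case True
  then show ?thesis
    using degree_legendre_le[of i] by (intro legendre_orthogonal_low_degree) simp
next
  case False
  then show ?thesis
    using assms degree_legendre_le[of k] legendre_orthogonal_low_degree[of "legendre k" i]
    by (simp add: mult.commute)
qed

lemma legendre_norm: "poly_integral (legendre k * legendre k) = 2 / real (2 * k + 1)"
proof -
  have "poly_integral (legendre k * legendre k)
      = (\<Sum>i\<le>k. coeff (legendre k) i * legendre_mom k i)"
    by (simp add: poly_integral_mult_expand[OF degree_legendre_le] legendre_mom_def)
  also have "\<dots> = coeff (legendre k) k * legendre_mom k k"
    by (simp add: lessThan_Suc_atMost[symmetric] legendre_mom_eq_0)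
  finally show ?thesis
    by (simp add: coeff_legendre_mult_legendre_mom)
qed

lemma coeff_legendre_diag_nonzero: "coeff (legendre k) k \<noteq> 0"
  using coeff_legendre_mult_legendre_mom[of k] by auto

lemma legendre_span:
  assumes "degree q \<le> m"
  shows "\<exists>a. q = (\<Sum>i\<le>m. smult (a i) (legendre i))"
  using assms
proof (induction m arbitrary: q)
  case 0
  then have "q = smult (coeff q 0) (legendre 0)"
    by (simp add: degree_0_id)
  then show ?case
    by auto
next
  case (Suc m)
  define b where "b = coeff q (Suc m) / coeff (legendre (Suc m)) (Suc m)"
  have "degree (q - smult b (legendre (Suc m))) \<le> m"
  proof (rule degree_le, intro allI impI)
    fix j assume "m < j"
    then consider "j = Suc m" | "Suc m < j"
      by linarith
    then show "coeff (q - smult b (legendre (Suc m))) j = 0"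
    proof cases
      case 1
      then show ?thesis
        using coeff_legendre_diag_nonzero[of "Suc m"] by (simp add: b_def)
    next
      case 2
      then show ?thesis
        using Suc.prems by (simp add: coeff_legendre_eq_0 coeff_eq_0)
    qed
  qed
  then obtain a where "q - smult b (legendre (Suc m)) = (\<Sum>i\<le>m. smult (a i) (legendre i))"
    using Suc.IH by blast
  then have "q = (\<Sum>i\<le>Suc m. smult ((a(Suc m := b)) i) (legendre i))"
    by (simp add: algebra_simps)
  then show ?case
    by blast
qed

lemma legendre_expansion:
  assumes "degree q \<le> m"
  shows "q = (\<Sum>i\<le>m. smult ((2 * real i + 1) / 2 * poly_integral (legendre i * q)) (legendre i))"
proof -
  obtain a where a: "q = (\<Sum>i\<le>m. smult (a i) (legendre i))"
    using legendre_span[OF assms] by blast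
  have "poly_integral (legendre l * q) = a l * (2 / real (2 * l + 1))" if "l \<le> m" for l
  proof -
    have "poly_integral (legendre l * q)
        = (\<Sum>i\<le>m. a i * poly_integral (legendre l * legendre i))"
      by (subst a) (simp add: sum_distrib_left poly_integral_sum poly_integral_smult)
    also have "\<dots>
        = (\<Sum>i\<le>m. if i = l then a l * poly_integral (legendre l * legendre l) else 0)"
      by (intro sum.cong) (auto simp: legendre_orthogonal)
    also have "\<dots> = a l * poly_integral (legendre l * legendre l)"
      using that by simp
    finally show ?thesis
      by (simp add: legendre_norm)
  qed
  then have coeff_a: "a i = (2 * real i + 1) / 2 * poly_integral (legendre i * q)" if "i \<le> m" for i
    using that by (simp add: field_simps)
  show ?thesis
    by (subst a) (rule sum.cong; simp add: coeff_a)
qed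

theorem mainTheorem10:
  fixes m n :: nat
  shows "\<forall>j \<in> {1..n+1}.
           F 1 (m + j) = (\<Sum>i = 1..m+1. ((2 * real i - 1) / 2 * F i (m + 1)) * F i j)"
proof
  fix j assume "j \<in> {1..n+1}"
  then obtain l where j: "j = Suc l"
    by (cases j) auto
  have "F 1 (m + j) = poly_integral ([:0, 1:] ^ m * [:0, 1:] ^ l)"
    by (simp add: legendre_moment_eq_legendre_mom legendre_mom_def j power_add)
  also have "\<dots> = (\<Sum>i\<le>m. ((2 * real i + 1) / 2 * legendre_mom i m) * legendre_mom i l)"
    by (subst legendre_expansion[of "[:0, 1:] ^ m" m])
       (simp_all add: degree_power_eq sum_distrib_right poly_integral_sum poly_integral_smult
         legendre_mom_def mult.assoc)
  also have "\<dots> = (\<Sum>i = 0..m. ((2 * real (Suc i) - 1) / 2 * F (Suc i) (m + 1)) * F (Suc i) j)"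
    by (simp add: atLeast0AtMost legendre_moment_eq_legendre_mom j add.commute)
  also have "\<dots> = (\<Sum>i = 1..m+1. ((2 * real i - 1) / 2 * F i (m + 1)) * F i j)"
    using sum.shift_bounds_cl_Suc_ivl[of "\<lambda>i. ((2 * real i - 1) / 2 * F i (m + 1)) * F i j" 0 m]
    by simp
  finally show "F 1 (m + j) = (\<Sum>i = 1..m+1. ((2 * real i - 1) / 2 * F i (m + 1)) * F i j)" .
qed

end
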